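(* Let $t\in T$ with $t>0$, and assume each source is present on a contiguous run of time steps: if $n\in A_{t_1}$ and $n\in A_{t_3}$ with $t_1\le t_2\le t_3$ in $T$, then $n\in A_{t_2}$. Let $M_{t-\delta}$ be a gated input-set model with registered set $R$ and thresholds $(\theta^\alpha_n,\theta^\omega_n)_{n\in R}$ such that (i) $M_{t-\delta}$ has RCS at $t-\delta$, (ii) $\theta^\alpha_n,\theta^\omega_n\le t-\delta$ for all $n\in R$, and (iii) $R\subseteq\bigcup_{t'\in T,\,t'\le t-\delta}A_{t'}$. Suppose no new source is introduced at $t$, i.e. $A_t\subseteq A_{t-\delta}$ (zero or more sources may be removed). Define $M_t$ from $M_{t-\delta}$ by setting $\theta^\omega_n=t$ for every $n\in A_t$ and leaving all other thresholds and the registered set unchanged. Then $M_t$ accurately models time $t$ and has RCS at $t$ (and all its thresholds are $\le t$).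
   Context: Time steps form the set $T=\{0,\delta,2\delta,\dots\}$ for a fixed time step size $\delta>0$ (so $\min T=0$). Sources (e.g. agents) are identified by natural numbers. At each $t\in T$ a finite set $A_t\subseteq\mathbb{N}$ of sources is present, and each present source $n\in A_t$ supplies a value $x_n(t)$ of a fixed type $\mathcal{T}$. The true input set at time $t$ is $S(t)=\{(n,x_n(t)) : n\in A_t\}\subseteq \mathbb{N}\times\mathcal{T}$. A gated input-set model $M$ consists of a finite set $R\subseteq\mathbb{N}$ of registered sources and, for each $n\in R$, two time thresholds $\theta^\alpha_n,\theta^\omega_n\in T$ (parameters of two time-conditional variables). The gated contribution of $n\in R$ at time $t$ is $g_n(t)=\{(n,x_n(t))\}$ if $\theta^\alpha_n\le t\le\theta^\omega_n$, and $g_n(t)=\emptyset$ otherwise. The input set computed by $M$ at time $t$ is $S_M(t)=\bigcup_{n\in R} g_n(t)$ (realised by a chain of union variables starting from a socket variable with degenerate distribution at $\emptyset$). $M$ accurately models time $t$ if $S_M(t)=S(t)$. A model $M_t$ has retrospective causal stationarity (RCS) at $t$ if it accurately models $t$ and every $t'\in T$ with $t'<t$. *)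

theory Defs
  imports Complex_Main
begin

definition timesteps :: "real \<Rightarrow> real set" where
  "timesteps \<delta> = {real k * \<delta> | k. True}"

definition true_input_set :: "(real \<Rightarrow> nat set) \<Rightarrow> (nat \<Rightarrow> real \<Rightarrow> 'v) \<Rightarrow> real \<Rightarrow> (nat \<times> 'v) set" where
  "true_input_set A x t = {(n, x n t) | n. n \<in> A t}"

definition gated :: "(nat \<Rightarrow> real \<Rightarrow> 'v) \<Rightarrow> (nat \<Rightarrow> real) \<Rightarrow> (nat \<Rightarrow> real) \<Rightarrow> nat \<Rightarrow> real \<Rightarrow> (nat \<times> 'v) set" where
  "gated x \<theta>\<alpha> \<theta>\<omega> n t = (if \<theta>\<alpha> n \<le> t \<and> t \<le> \<theta>\<omega> n then {(n, x n t)} else {})"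

definition model_input_set :: "(nat \<Rightarrow> real \<Rightarrow> 'v) \<Rightarrow> nat set \<Rightarrow> (nat \<Rightarrow> real) \<Rightarrow> (nat \<Rightarrow> real) \<Rightarrow> real \<Rightarrow> (nat \<times> 'v) set" where
  "model_input_set x R \<theta>\<alpha> \<theta>\<omega> t = {} \<union> (\<Union>n\<in>R. gated x \<theta>\<alpha> \<theta>\<omega> n t)"

definition accurately_models :: "(real \<Rightarrow> nat set) \<Rightarrow> (nat \<Rightarrow> real \<Rightarrow> 'v) \<Rightarrow> nat set \<Rightarrow> (nat \<Rightarrow> real) \<Rightarrow> (nat \<Rightarrow> real) \<Rightarrow> real \<Rightarrow> bool" where
  "accurately_models A x R \<theta>\<alpha> \<theta>\<omega> t \<longleftrightarrow> model_input_set x R \<theta>\<alpha> \<theta>\<omega> t = true_input_set A x t"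

definition RCS :: "real \<Rightarrow> (real \<Rightarrow> nat set) \<Rightarrow> (nat \<Rightarrow> real \<Rightarrow> 'v) \<Rightarrow> nat set \<Rightarrow> (nat \<Rightarrow> real) \<Rightarrow> (nat \<Rightarrow> real) \<Rightarrow> real \<Rightarrow> bool" where
  "RCS \<delta> A x R \<theta>\<alpha> \<theta>\<omega> t \<longleftrightarrow> accurately_models A x R \<theta>\<alpha> \<theta>\<omega> t \<and>
     (\<forall>t'\<in>timesteps \<delta>. t' < t \<longrightarrow> accurately_models A x R \<theta>\<alpha> \<theta>\<omega> t')"

end

theory Submission
  imports Defs
begin

text \<open>Every source present at \<open>t\<close> was already present at \<open>t - \<delta>\<close>, where the accurate
  model \<open>M\<^sub>t\<^sub>-\<^sub>\<delta>\<close> must have its gate open; moving its upper threshold to \<open>t\<close> keeps it open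
  at \<open>t\<close>. All other gates close at or before \<open>t - \<delta>\<close>, so \<open>M\<^sub>t\<close> is accurate at \<open>t\<close>.
  Since the thresholds only move from values \<open>\<ge> t - \<delta>\<close> to \<open>t\<close>, no gate changes at times
  \<open>\<le> t - \<delta>\<close>, which are exactly the earlier time steps; so RCS is inherited.\<close>

lemma timesteps_less_imp_le_diff:
  assumes "\<delta> > 0" "t \<in> timesteps \<delta>" "t' \<in> timesteps \<delta>" "t' < t"
  shows "t' \<le> t - \<delta>"
proof -
  obtain m k :: nat where m: "t = real m * \<delta>" and k: "t' = real k * \<delta>"
    using assms(2,3) unfolding timesteps_def by blast
  have "k < m"
    using assms(1,4) m k by (simp add: mult_less_cancel_right)
  then have "real k * \<delta> \<le> (real m - 1) * \<delta>"
    using assms(1) by (intro mult_right_mono) linarith+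
  then show ?thesis
    using m k by (simp add: algebra_simps)
qed

lemma accurately_models_gate_open:
  assumes "accurately_models A x R \<theta>\<alpha> \<theta>\<omega> s" "n \<in> A s"
  shows "n \<in> R \<and> \<theta>\<alpha> n \<le> s \<and> s \<le> \<theta>\<omega> n"
proof -
  have "(n, x n s) \<in> model_input_set x R \<theta>\<alpha> \<theta>\<omega> s"
    using assms unfolding accurately_models_def true_input_set_def by blast
  then show ?thesis
    unfolding model_input_set_def gated_def by (auto split: if_splits)
qed

lemma model_input_set_upper_cong:
  assumes "\<forall>n\<in>R. t \<le> \<theta>\<omega> n \<longleftrightarrow> t \<le> \<theta>\<omega>' n"
  shows "model_input_set x R \<theta>\<alpha> \<theta>\<omega>' t = model_input_set x R \<theta>\<alpha> \<theta>\<omega> t"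
  using assms unfolding model_input_set_def gated_def by auto

lemma RCS_extend:
  assumes "RCS \<delta> A x R \<theta>\<alpha> \<theta>\<omega> s"
    and "accurately_models A x R \<theta>\<alpha> \<theta>\<omega>' t"
    and "\<forall>t'\<in>timesteps \<delta>. t' < t \<longrightarrow> t' \<le> s"
    and "\<forall>t'\<le>s. model_input_set x R \<theta>\<alpha> \<theta>\<omega>' t' = model_input_set x R \<theta>\<alpha> \<theta>\<omega> t'"
  shows "RCS \<delta> A x R \<theta>\<alpha> \<theta>\<omega>' t"
proof -
  have "accurately_models A x R \<theta>\<alpha> \<theta>\<omega> t'" if "t' \<in> timesteps \<delta>" "t' \<le> s" for t'
    using assms(1) that unfolding RCS_def by (cases "t' = s") auto
  then show ?thesis
    using assms(2-4) unfolding RCS_def accurately_models_def by auto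
qed

theorem lemma3:
  fixes \<delta> t :: real and A :: "real \<Rightarrow> nat set" and x :: "nat \<Rightarrow> real \<Rightarrow> 'v"
    and R :: "nat set" and \<theta>\<alpha> \<theta>\<omega> :: "nat \<Rightarrow> real"
  assumes delta_pos: "\<delta> > 0"
    and t_in: "t \<in> timesteps \<delta>" and t_pos: "t > 0"
    and A_fin: "\<forall>s\<in>timesteps \<delta>. finite (A s)"
    and contiguous: "\<forall>n t1 t2 t3. t1 \<in> timesteps \<delta> \<longrightarrow> t2 \<in> timesteps \<delta> \<longrightarrow> t3 \<in> timesteps \<delta> \<longrightarrow>
        t1 \<le> t2 \<longrightarrow> t2 \<le> t3 \<longrightarrow> n \<in> A t1 \<longrightarrow> n \<in> A t3 \<longrightarrow> n \<in> A t2"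
    and R_fin: "finite R"
    and thr_in_T: "\<forall>n\<in>R. \<theta>\<alpha> n \<in> timesteps \<delta> \<and> \<theta>\<omega> n \<in> timesteps \<delta>"
    and rcs_prev: "RCS \<delta> A x R \<theta>\<alpha> \<theta>\<omega> (t - \<delta>)"
    and thr_le: "\<forall>n\<in>R. \<theta>\<alpha> n \<le> t - \<delta> \<and> \<theta>\<omega> n \<le> t - \<delta>"
    and R_sub: "R \<subseteq> (\<Union>t'\<in>{s \<in> timesteps \<delta>. s \<le> t - \<delta>}. A t')"
    and no_new: "A t \<subseteq> A (t - \<delta>)"
  shows "accurately_models A x R \<theta>\<alpha> (\<lambda>n. if n \<in> A t then t else \<theta>\<omega> n) t
       \<and> RCS \<delta> A x R \<theta>\<alpha> (\<lambda>n. if n \<in> A t then t else \<theta>\<omega> n) t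
       \<and> (\<forall>n\<in>R. \<theta>\<alpha> n \<le> t \<and> (\<lambda>n. if n \<in> A t then t else \<theta>\<omega> n) n \<le> t)"
proof -
  define \<theta>\<omega>' where "\<theta>\<omega>' = (\<lambda>n. if n \<in> A t then t else \<theta>\<omega> n)"
  have open_prev: "n \<in> R \<and> \<theta>\<alpha> n \<le> t - \<delta> \<and> t - \<delta> \<le> \<theta>\<omega> n" if "n \<in> A t" for n
    using accurately_models_gate_open rcs_prev no_new that unfolding RCS_def by blast
  have acc: "accurately_models A x R \<theta>\<alpha> \<theta>\<omega>' t"
    using open_prev thr_le delta_pos
    unfolding accurately_models_def model_input_set_def true_input_set_def gated_def \<theta>\<omega>'_def
    by (fastforce split: if_splits)
  have "\<forall>t'\<le>t - \<delta>. model_input_set x R \<theta>\<alpha> \<theta>\<omega>' t' = model_input_set x R \<theta>\<alpha> \<theta>\<omega> t'"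
    using open_prev delta_pos unfolding \<theta>\<omega>'_def
    by (intro allI impI model_input_set_upper_cong) force
  then have "RCS \<delta> A x R \<theta>\<alpha> \<theta>\<omega>' t"
    using RCS_extend rcs_prev acc timesteps_less_imp_le_diff[OF delta_pos t_in] by blast
  moreover have "\<forall>n\<in>R. \<theta>\<alpha> n \<le> t \<and> \<theta>\<omega>' n \<le> t"
    using thr_le delta_pos unfolding \<theta>\<omega>'_def by force
  ultimately show ?thesis
    using acc unfolding \<theta>\<omega>'_def by simp
qed

end
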